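(* Let $\tau$ be a non-scalar tame inertial type, $(J,r)$ a maximal refined shape for $\tau$, and $\mathfrak{P}\in\mathrm{Ext}^1_{\mathbb F}(\mathfrak{M},\mathfrak{N})$ an extension of type $\tau$ and refined shape $(J,r)$ (where $(\mathfrak M,\mathfrak N)$ is a pair of rank one modules of refined shape $(J,r)$). Let $D=D(\mathfrak{P})$ be its Dieudonné module. Then for each $i\in\mathbb{Z}/f'\mathbb{Z}$: if $i\in J$ then $F=0$ on $D_{\eta,i-1}$, and if $i\notin J$ then $V=0$ on $D_{\eta,i}$.
   Context: Setup. $p$ odd prime, $K/\mathbb Q_p$ finite with residue field of size $p^f$, ramification index $e$; $L/K$ unramified quadratic; $\pi$ uniformiser of $K$. $\tau=\eta\oplus\eta'$ non-scalar tame inertial type (ordering fixed): principal series ($\eta\ne\eta'$ both extend to $G_K$) or cuspidal ($\eta'=\eta^{p^f}\ne\eta$, $\eta$ extends to $G_L$). $K'=K(\pi^{1/(p^f-1)})$, $f'=f$, or $K'=L(\pi^{1/(p^{2f}-1)})$, $f'=2f$; $k'$ residue field of $K'$; $e'=e(p^{f'}-1)$; $\pi'=\pi^{1/(p^{f'}-1)}$; $E(u)$ its minimal polynomial over $W(k')[1/p]$; $h(g)\in k'$ reduction of $g(\pi')/\pi'$. $\mathbb F$ finite field containing images of $k'$ and of $\bar\eta,\bar\eta'$; $\sigma_i:k'\hookrightarrow\mathbb F$, $\sigma_{i+1}^p=\sigma_i$; $e_i\in k'\otimes\mathbb F$ the idempotents with $(x\otimes1)e_i=(1\otimes\sigma_i(x))e_i$.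 $k_i,k'_i\in\mathbb Z/(p^{f'}-1)$ with $\bar\eta=\sigma_i\circ h^{k_i}$, $\bar\eta'=\sigma_i\circ h^{k'_i}$ on $I(K'/K)$; $[n]$ least non-negative residue mod $p^{f'}-1$. Rank one modules $\mathfrak M(r,a,c)$ over $\mathfrak S_\mathbb F=(k'\otimes\mathbb F)[[u]]$: $e_i\mathfrak M=\mathbb F[[u]]m_i$, $\Phi(1\otimes m_{i-1})=a_iu^{r_i}m_i$, $\hat g(\sum m_i)=\sum h(g)^{c_i}m_i$. A pair $(\mathfrak M(r,a,c),\mathfrak M(s,b,d))$ has type $\tau$ if $\{c_i,d_i\}=\{k_i,k'_i\}$ and $r_i+s_i=e'$; its shape is $J=\{i:c_i=k_i\}$ and refined shape $(J,r)$; $(i-1,i)$ is a transition if exactly one of $i-1,i$ lies in $J$; $(J,r)$ is maximal if $r_i=e'$ at non-transitions and $r_i=e'-[c_i-d_i]$ at transitions. $\mathrm{Ext}^1_{\mathbb F}$ is taken in the category of $\mathfrak S_\mathbb F$-modules with $\varphi$-semilinear endomorphism and commuting semilinear descent data; every such extension $\mathfrak P$ of this pair is a rank two Breuil–Kisin module of height $\le1$ and type $\tau$. Dieudonné module: $D(\mathfrak P)=\mathfrak P/u\mathfrak P$ with the induced $\mathrm{Gal}(K'/K)$-action, $F$ induced by $\varphi_\mathfrak P$, and $V=c^{-1}\mathfrak V \bmod u$, where $E(0)=cp$ and $\mathfrak V$ is the unique map with $\mathfrak V\circ\varphi_{\mathfrak P}=E(u)$. $D_\eta$ is the submodule on which $I(K'/K)$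 acts via $\bar\eta$, and $D_{\eta,i}=e_iD_\eta$; $F$ maps $D_{\eta,i}\to D_{\eta,i+1}$ and $V$ maps $D_{\eta,i+1}\to D_{\eta,i}$. *)

theory Defs
  imports "HOL-Computational_Algebra.Formal_Power_Series" "HOL-Computational_Algebra.Primes"
begin

(* The coefficient field F is a type 'a.  The index set
   Z/f'Z is represented by {0..<f'}; predecessor i-1 is prev f' i.
   An element g of I(K'/K) is represented by zeta = sigma_0(h(g)) in F,
   which ranges over the (p^f'-1)-th roots of unity of F; then
   sigma_i(h(g)) = zeta^(p^(f'-i)) since sigma_(i+1)^p = sigma_i.
   On e_i(k' tensor F)[[u]] = F[[u]] the variable u is fps_X.            *)

definition prev :: "nat \<Rightarrow> nat \<Rightarrow> nat" where
  "prev f' i = (i + f' - 1) mod f'"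

definition roots_q :: "nat \<Rightarrow> nat \<Rightarrow> ('a::field) set" where
  "roots_q p f' = {z. z ^ (p ^ f' - 1) = 1}"

(* sigma_i(h(g)) for the inertia element g with sigma_0(h(g)) = zeta *)
definition omega :: "nat \<Rightarrow> nat \<Rightarrow> nat \<Rightarrow> 'a::field \<Rightarrow> 'a" where
  "omega p f' i z = z ^ (p ^ (f' - i))"

definition resid :: "nat \<Rightarrow> nat \<Rightarrow> int \<Rightarrow> nat" where
  "resid p f' n = nat (n mod int (p ^ f' - 1))"

definition fps_scale :: "'a::comm_ring_1 \<Rightarrow> 'a fps \<Rightarrow> 'a fps" where
  "fps_scale w g = Abs_fps (\<lambda>n. w ^ n * fps_nth g n)"

definition fps_frob :: "nat \<Rightarrow> 'a::comm_ring_1 fps \<Rightarrow> 'a fps" where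
  "fps_frob p g = Abs_fps (\<lambda>n. if p dvd n then fps_nth g (n div p) else 0)"

(* 2x2 matrices (A11, A12, A21, A22) w.r.t. an ordered basis (m, n):
   column 1 = coordinates of the image of m, column 2 = image of n.   *)
type_synonym 'b mat2 = "'b \<times> 'b \<times> 'b \<times> 'b"

fun mat_app :: "'b::comm_ring_1 mat2 \<Rightarrow> 'b \<times> 'b \<Rightarrow> 'b \<times> 'b" where
  "mat_app (a11, a12, a21, a22) (v1, v2) = (a11 * v1 + a12 * v2, a21 * v1 + a22 * v2)"

fun mat_mult :: "'b::comm_ring_1 mat2 \<Rightarrow> 'b mat2 \<Rightarrow> 'b mat2" where
  "mat_mult (a11, a12, a21, a22) (b11, b12, b21, b22) =
     (a11 * b11 + a12 * b21, a11 * b12 + a12 * b22,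
      a21 * b11 + a22 * b21, a21 * b12 + a22 * b22)"

fun mat_mod_u :: "'a::comm_ring_1 fps mat2 \<Rightarrow> 'a mat2" where
  "mat_mod_u (a11, a12, a21, a22) = (fps_nth a11 0, fps_nth a12 0, fps_nth a21 0, fps_nth a22 0)"

(* Extensions P of M(r,a,c) by N(s,b,d) (0 -> N -> P -> M -> 0).
   e_i P = F[[u]] m_i + F[[u]] n_i with n_i the basis of N and m_i a lift
   of the basis of M.  Then
     phi(1 (x) m_(i-1)) = a_i u^(r_i) m_i + x_i n_i,
     phi(1 (x) n_(i-1)) = b_i u^(s_i) n_i,
     g^(m_i) = sigma_i(h g)^(c_i) m_i + z_i(g) n_i,
     g^(n_i) = sigma_i(h g)^(d_i) n_i.                                  *)

(* matrix of the linearised Frobenius  e_(i-1) phi^*P -> e_i P *)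
definition Phi ::
  "(nat \<Rightarrow> nat) \<Rightarrow> (nat \<Rightarrow> 'a::field) \<Rightarrow> (nat \<Rightarrow> nat) \<Rightarrow> (nat \<Rightarrow> 'a) \<Rightarrow> (nat \<Rightarrow> 'a fps)
   \<Rightarrow> nat \<Rightarrow> 'a fps mat2" where
  "Phi r a s b x i =
     (fps_const (a i) * fps_X ^ r i, 0, x i, fps_const (b i) * fps_X ^ s i)"

definition phi_P where
  "phi_P p r a s b x i v =
     mat_app (Phi r a s b x i) (fps_frob p (fst v), fps_frob p (snd v))"

(* matrix of the descent datum g^ on e_i P, g given by zeta *)
definition Gmat ::
  "nat \<Rightarrow> nat \<Rightarrow> (nat \<Rightarrow> nat) \<Rightarrow> (nat \<Rightarrow> nat) \<Rightarrow> (nat \<Rightarrow> 'a::field \<Rightarrow> 'a fps)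
   \<Rightarrow> nat \<Rightarrow> 'a \<Rightarrow> 'a fps mat2" where
  "Gmat p f' c d z i zeta =
     (fps_const (omega p f' i zeta ^ c i), 0, z i zeta, fps_const (omega p f' i zeta ^ d i))"

definition g_P where
  "g_P p f' c d z i zeta v =
     mat_app (Gmat p f' c d z i zeta)
       (fps_scale (omega p f' i zeta) (fst v), fps_scale (omega p f' i zeta) (snd v))"

definition is_extension where
  "is_extension p f' r a c s b d x z \<longleftrightarrow>
     (\<forall>i<f'. a i \<noteq> 0 \<and> b i \<noteq> 0) \<and>
     (\<forall>i<f'. \<forall>zeta\<in>roots_q p f'. \<forall>v.
        g_P p f' c d z i zeta (phi_P p r a s b x i v)
          = phi_P p r a s b x i (g_P p f' c d z (prev f' i) zeta v)) \<and>
     (\<forall>i<f'. \<forall>zeta\<in>roots_q p f'. \<forall>xi\<in>roots_q p f'. \<forall>v.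
        g_P p f' c d z i zeta (g_P p f' c d z i xi v) = g_P p f' c d z i (zeta * xi) v) \<and>
     (\<forall>i<f'. \<forall>v. g_P p f' c d z i 1 v = v)"

(* tame non-scalar inertial type: k_i, k'_i defined by
   eta = sigma_i o h^(k_i), eta' = sigma_i o h^(k'_i) on I(K'/K)            *)
definition tame_type :: "'a::field itself \<Rightarrow> nat \<Rightarrow> nat \<Rightarrow> nat \<Rightarrow> (nat \<Rightarrow> nat) \<Rightarrow> (nat \<Rightarrow> nat) \<Rightarrow> bool" where
  "tame_type T p f f' k k' \<longleftrightarrow>
     (\<forall>i<f'. k i < p ^ f' - 1 \<and> k' i < p ^ f' - 1) \<and>
     (\<forall>i<f'. \<forall>zeta\<in>(roots_q p f' :: 'a set).
        omega p f' i zeta ^ k i = zeta ^ k 0 \<and> omega p f' i zeta ^ k' i = zeta ^ k' 0) \<and>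
     ((f' = f \<and> k 0 \<noteq> k' 0)
      \<or> (f' = 2 * f \<and> k 0 \<noteq> k' 0 \<and> k' 0 = (p ^ f * k 0) mod (p ^ f' - 1)))"

definition pair_has_type where
  "pair_has_type f' e' k k' r c s d \<longleftrightarrow>
     (\<forall>i<f'. {c i, d i} = {k i, k' i} \<and> r i + s i = e')"

definition shape :: "nat \<Rightarrow> (nat \<Rightarrow> nat) \<Rightarrow> (nat \<Rightarrow> nat) \<Rightarrow> nat set" where
  "shape f' k c = {i. i < f' \<and> c i = k i}"

definition transition :: "nat \<Rightarrow> nat set \<Rightarrow> nat \<Rightarrow> bool" where
  "transition f' J i \<longleftrightarrow> (prev f' i \<in> J) \<noteq> (i \<in> J)"

definition maximal_shape where
  "maximal_shape p f' e' J r c d \<longleftrightarrow>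
     (\<forall>i<f'. (\<not> transition f' J i \<longrightarrow> r i = e') \<and>
             (transition f' J i \<longrightarrow> r i = e' - resid p f' (int (c i) - int (d i))))"

(* e_i D = F m_i-bar + F n_i-bar *)

definition F_D where
  "F_D r a s b x i v = mat_app (mat_mod_u (Phi r a s b x i)) v"

(* the matrix of frak V : e_i P -> e_(i-1) phi^*P, unique with V o phi = E(u);
   E(u) = u^e' modulo p *)
definition Vfrak where
  "Vfrak e' r a s b x i =
     (THE W. mat_mult W (Phi r a s b x i) = (fps_X ^ e', 0, 0, fps_X ^ e'))"

definition V_D where   (* V = c^-1 frak V mod u : D_i -> D_(i-1) *)
  "V_D e' cbar r a s b x i v =
     (let w = mat_app (mat_mod_u (Vfrak e' r a s b x i)) v
      in (inverse (cbar i) * fst w, inverse (cbar i) * snd w))"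

(* D_(eta,i): the part of e_i D on which I(K'/K) acts through eta-bar *)
definition D_eta where
  "D_eta p f' k c d z i =
     {v. \<forall>zeta\<in>roots_q p f'.
        mat_app (mat_mod_u (Gmat p f' c d z i zeta)) v = (zeta ^ k 0 * fst v, zeta ^ k 0 * snd v)}"

end

theory Submission
  imports Defs
begin

(*
  Work modulo u and evaluate the descent datum at a generator g of I(K'/K), i.e. at a primitive
  (p^f'-1)-th root of unity w = sigma_0(h(g)).  On D_i, g preserves the line spanned by n_i,
  acting there by eta'(g) if i is in J and by eta(g) otherwise, and acts on D_i / <n_i> by the
  other character.  As eta(g) <> eta'(g), D_(eta,i) is the line <n_i> if i is not in J and a line
  <m_i + t n_i> if i is in J.  Maximality of the shape gives r_i > 0 everywhere, s_i > 0 at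
  transitions and s_i = 0 elsewhere; so modulo u, F maps m_(i-1) into <n_i>, F(n_(i-1)) vanishes
  at transitions, and V(n_i) = 0.  This settles V on D_(eta,i) for i not in J and F at a
  transition into J.  If i-1 and i both lie in J, comparing constant terms in the commutation of
  phi with g on m_(i-1) shows that F(m_(i-1) + t n_(i-1)) = 0.
*)

lemma fps_nth_fps_frob_0 [simp]: "fps_nth (fps_frob p g) 0 = fps_nth g 0"
  by (simp add: fps_frob_def)

lemma fps_nth_fps_scale_0 [simp]: "fps_nth (fps_scale w g) 0 = fps_nth g 0"
  by (simp add: fps_scale_def)

lemma mat_mult_assoc: "mat_mult (mat_mult A B) C = mat_mult A (mat_mult B C)"
  by (cases A; cases B; cases C) (simp add: algebra_simps)

lemma mat_mult_scalar_cancel: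
  fixes t :: "'b::idom"
  assumes "t \<noteq> 0" "mat_mult W (t, 0, 0, t) = mat_mult (t, 0, 0, t) W'"
  shows "W = W'"
  using assms by (cases W; cases W') (simp add: mult.commute)

lemma fps_monomial_mult:
  "fps_const c * fps_X ^ m * (fps_const c' * fps_X ^ n)
   = fps_const (c * c') * (fps_X ^ (m + n) :: 'a::comm_ring_1 fps)"
  by (simp add: power_add mult.commute mult.left_commute flip: fps_const_mult)

lemma Vfrak_eq:
  fixes a b :: "nat \<Rightarrow> 'a::field"
  assumes "a i \<noteq> 0" "b i \<noteq> 0" "r i + s i = e'"
  shows "Vfrak e' r a s b x i =
    (fps_const (inverse (a i)) * fps_X ^ s i, 0,
     - x i * fps_const (inverse (a i * b i)), fps_const (inverse (b i)) * fps_X ^ r i)"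
    (is "_ = ?W")
proof -
  let ?X = "(fps_X ^ e', 0, 0, fps_X ^ e') :: 'a fps mat2"
  have left: "mat_mult ?W (Phi r a s b x i) = ?X" and right: "mat_mult (Phi r a s b x i) ?W = ?X"
    using assms by (simp_all add: Phi_def fps_monomial_mult add.commute) (simp_all add: field_simps)
  show ?thesis
    unfolding Vfrak_def
  proof (rule the_equality)
    fix W assume "mat_mult W (Phi r a s b x i) = ?X"
    then have "mat_mult W ?X = mat_mult ?X ?W"
      by (metis mat_mult_assoc right)
    then show "W = ?W"
      by (rule mat_mult_scalar_cancel[rotated]) simp
  qed (fact left)
qed

lemma F_D_eq:
  "F_D r a s b x i (v1, v2) = (a i * 0 ^ r i * v1, fps_nth (x i) 0 * v1 + b i * 0 ^ s i * v2)"
  by (simp add: F_D_def Phi_def)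

lemma V_D_eq:
  fixes a b :: "nat \<Rightarrow> 'a::field"
  assumes "a i \<noteq> 0" "b i \<noteq> 0" "r i + s i = e'"
  shows "V_D e' cbar r a s b x i (v1, v2) =
    (inverse (cbar i) * (inverse (a i) * 0 ^ s i * v1),
     inverse (cbar i) * (- fps_nth (x i) 0 * inverse (a i * b i) * v1 + inverse (b i) * 0 ^ r i * v2))"
  using assms by (simp add: V_D_def Vfrak_eq)

lemma D_eta_coords:
  fixes k :: "nat \<Rightarrow> nat"
  assumes "v \<in> D_eta p f' k c d z i" "\<zeta> \<in> roots_q p f'"
  shows "omega p f' i \<zeta> ^ c i * fst v = \<zeta> ^ k 0 * fst v"
    and "fps_nth (z i \<zeta>) 0 * fst v + omega p f' i \<zeta> ^ d i * snd v = \<zeta> ^ k 0 * snd v"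
  using assms by (cases v; auto simp: D_eta_def Gmat_def)+

lemma D_eta_fst_eq_0:
  fixes k :: "nat \<Rightarrow> nat" and z :: "nat \<Rightarrow> 'a::field \<Rightarrow> 'a fps" and \<zeta> :: 'a
  assumes "v \<in> D_eta p f' k c d z i" "\<zeta> \<in> roots_q p f'" "omega p f' i \<zeta> ^ c i \<noteq> \<zeta> ^ k 0"
  shows "fst v = 0"
  using D_eta_coords(1)[OF assms(1,2)] assms(3) by simp

lemma is_extension_commute_mod_u:
  assumes "is_extension p f' r a c s b d x z" "i < f'" "\<zeta> \<in> roots_q p f'"
  shows "fps_nth (z i \<zeta>) 0 * a i * 0 ^ r i + omega p f' i \<zeta> ^ d i * fps_nth (x i) 0
       = fps_nth (x i) 0 * omega p f' (prev f' i) \<zeta> ^ c (prev f' i)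
         + b i * 0 ^ s i * fps_nth (z (prev f' i) \<zeta>) 0"
proof -
  have "g_P p f' c d z i \<zeta> (phi_P p r a s b x i (1, 0))
      = phi_P p r a s b x i (g_P p f' c d z (prev f' i) \<zeta> (1, 0))"
    using assms unfolding is_extension_def by blast
  from arg_cong[OF this, of "\<lambda>v. fps_nth (snd v) 0"] show ?thesis
    by (simp add: g_P_def phi_P_def Gmat_def Phi_def power_0_left mult_ac)
qed

lemma primitive_root_pow_eq_iff:
  fixes w :: "'a::field"
  assumes prim: "\<forall>j. 0 < j \<and> j < n \<longrightarrow> w ^ j \<noteq> 1" and "w \<noteq> 0" "l < n" "m < n"
  shows "w ^ l = w ^ m \<longleftrightarrow> l = m"
proof
  assume eq: "w ^ l = w ^ m"
  show "l = m"
  proof (rule ccontr)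
    assume "l \<noteq> m"
    then consider "l < m" | "m < l" by linarith
    then show False
    proof cases
      case 1
      then have "w ^ m = w ^ l * w ^ (m - l)" by (simp flip: power_add)
      then show False using eq prim \<open>w \<noteq> 0\<close> 1 \<open>m < n\<close> by auto
    next
      case 2
      then have "w ^ l = w ^ m * w ^ (l - m)" by (simp flip: power_add)
      then show False using eq prim \<open>w \<noteq> 0\<close> 2 \<open>l < n\<close> by auto
    qed
  qed
qed simp

lemma resid_diff_bounds:
  assumes "c < p ^ f' - 1" "d < p ^ f' - 1" "c \<noteq> d"
  shows "0 < resid p f' (int c - int d) \<and> resid p f' (int c - int d) < p ^ f' - 1"
proof -
  define n where "n = p ^ f' - 1"
  have "\<not> int n dvd int c - int d"
    using dvd_imp_le_int[of "int c - int d" "int n"] assms unfolding n_def[symmetric] by auto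
  then have "(int c - int d) mod int n \<noteq> 0"
    by (simp add: mod_eq_0_iff_dvd)
  moreover have "0 \<le> (int c - int d) mod int n" "(int c - int d) mod int n < int n"
    using assms unfolding n_def[symmetric] by auto
  ultimately show ?thesis unfolding resid_def n_def[symmetric] by linarith
qed

lemma tame_type_pos: "tame_type TYPE('a::field) p f f' k k' \<Longrightarrow> 1 \<le> f \<Longrightarrow> 0 < f'"
  unfolding tame_type_def by auto

lemma tame_type_distinct_characters:
  fixes w :: "'a::field"
  assumes tt: "tame_type TYPE('a) p f f' k k'" "1 \<le> f"
    and w: "w ^ (p ^ f' - 1) = 1" "\<forall>j. 0 < j \<and> j < p ^ f' - 1 \<longrightarrow> w ^ j \<noteq> 1"
  shows "w ^ k 0 \<noteq> w ^ k' 0"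
proof -
  have k0: "k 0 < p ^ f' - 1" "k' 0 < p ^ f' - 1" "k 0 \<noteq> k' 0"
    using tt tame_type_pos[OF tt] unfolding tame_type_def by auto
  then have "0 < p ^ f' - 1" by linarith
  with w(1) have "w \<noteq> 0" by (auto simp: zero_power)
  with w(2) k0 show ?thesis by (simp add: primitive_root_pow_eq_iff)
qed

lemma pair_has_type_characters:
  fixes w :: "'a::field"
  assumes tt: "tame_type TYPE('a) p f f' k k'" "1 \<le> f"
    and w: "w ^ (p ^ f' - 1) = 1" "\<forall>j. 0 < j \<and> j < p ^ f' - 1 \<longrightarrow> w ^ j \<noteq> 1"
    and ty: "pair_has_type f' e' k k' r c s d" and i: "i < f'"
  shows "omega p f' i w ^ c i = (if i \<in> shape f' k c then w ^ k 0 else w ^ k' 0)"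
    and "omega p f' i w ^ d i = (if i \<in> shape f' k c then w ^ k' 0 else w ^ k 0)"
    and "c i \<noteq> d i" "c i < p ^ f' - 1" "d i < p ^ f' - 1"
proof -
  have "w \<in> roots_q p f'" using w(1) by (simp add: roots_q_def)
  then have om: "omega p f' i w ^ k i = w ^ k 0" "omega p f' i w ^ k' i = w ^ k' 0"
    and kb: "k i < p ^ f' - 1" "k' i < p ^ f' - 1"
    using tt(1) i unfolding tame_type_def by blast+
  have "k i \<noteq> k' i"
    using om tame_type_distinct_characters[OF tt w] by auto
  moreover have "{c i, d i} = {k i, k' i}"
    using ty i unfolding pair_has_type_def by blast
  ultimately have "(c i, d i) = (if i \<in> shape f' k c then (k i, k' i) else (k' i, k i))"
    using i by (auto simp: shape_def doubleton_eq_iff)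
  then show "omega p f' i w ^ c i = (if i \<in> shape f' k c then w ^ k 0 else w ^ k' 0)"
    and "omega p f' i w ^ d i = (if i \<in> shape f' k c then w ^ k' 0 else w ^ k 0)"
    and "c i \<noteq> d i" "c i < p ^ f' - 1" "d i < p ^ f' - 1"
    using om kb \<open>k i \<noteq> k' i\<close> by (auto split: if_splits)
qed

lemma maximal_shape_exponents:
  assumes "pair_has_type f' e' k k' r c s d" "maximal_shape p f' e' J r c d" "i < f'"
    and "p ^ f' - 1 \<le> e'" "c i < p ^ f' - 1" "d i < p ^ f' - 1" "c i \<noteq> d i"
  shows "0 < r i" and "transition f' J i \<Longrightarrow> 0 < s i" and "\<not> transition f' J i \<Longrightarrow> s i = 0"
proof -
  have "r i + s i = e'"
    using assms(1,3) unfolding pair_has_type_def by blast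
  moreover have "(\<not> transition f' J i \<longrightarrow> r i = e') \<and>
      (transition f' J i \<longrightarrow> r i = e' - resid p f' (int (c i) - int (d i)))"
    using assms(2,3) unfolding maximal_shape_def by blast
  moreover have "0 < resid p f' (int (c i) - int (d i)) \<and> resid p f' (int (c i) - int (d i)) < p ^ f' - 1"
    using resid_diff_bounds assms(5-7) by blast
  ultimately show "0 < r i" and "transition f' J i \<Longrightarrow> 0 < s i"
    and "\<not> transition f' J i \<Longrightarrow> s i = 0"
    using assms(4) by auto
qed

lemma F_D_vanishes_inside_shape:
  fixes k :: "nat \<Rightarrow> nat" and z :: "nat \<Rightarrow> 'a::field \<Rightarrow> 'a fps" and \<zeta> :: 'a
  assumes ext: "is_extension p f' r a c s b d x z" and i: "i < f'" and \<zeta>: "\<zeta> \<in> roots_q p f'"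
    and rs: "0 < r i" "s i = 0"
    and chars: "omega p f' i \<zeta> ^ d i = \<zeta> ^ k' 0"
      "omega p f' (prev f' i) \<zeta> ^ c (prev f' i) = \<zeta> ^ k 0"
      "omega p f' (prev f' i) \<zeta> ^ d (prev f' i) = \<zeta> ^ k' 0"
    and distinct: "\<zeta> ^ k 0 \<noteq> \<zeta> ^ k' 0"
    and v: "v \<in> D_eta p f' k c d z (prev f' i)"
  shows "F_D r a s b x i v = (0, 0)"
proof -
  obtain v1 v2 where v12: "v = (v1, v2)" by (cases v)
  let ?x0 = "fps_nth (x i) 0" and ?z0 = "fps_nth (z (prev f' i) \<zeta>) 0"
  have commute: "\<zeta> ^ k' 0 * ?x0 - ?x0 * \<zeta> ^ k 0 = b i * ?z0"
    using is_extension_commute_mod_u[OF ext i \<zeta>] rs chars by (simp add: zero_power)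
  have "?z0 * v1 + \<zeta> ^ k' 0 * v2 = \<zeta> ^ k 0 * v2"
    using D_eta_coords(2)[OF v \<zeta>] chars by (simp add: v12)
  then have eigen: "\<zeta> ^ k 0 * v2 - \<zeta> ^ k' 0 * v2 = ?z0 * v1"
    by (simp add: algebra_simps)
  have "(\<zeta> ^ k 0 - \<zeta> ^ k' 0) * (?x0 * v1 + b i * v2)
      = - (\<zeta> ^ k' 0 * ?x0 - ?x0 * \<zeta> ^ k 0) * v1 + b i * (\<zeta> ^ k 0 * v2 - \<zeta> ^ k' 0 * v2)"
    by (simp add: algebra_simps)
  also have "\<dots> = - (b i * ?z0) * v1 + b i * (?z0 * v1)"
    by (simp only: commute eigen)
  finally have "(\<zeta> ^ k 0 - \<zeta> ^ k' 0) * (?x0 * v1 + b i * v2) = 0"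
    by simp
  then have "?x0 * v1 + b i * v2 = 0"
    using distinct by simp
  then show ?thesis
    using rs by (simp add: v12 F_D_eq)
qed

locale maximal_shape_extension =
  fixes p f f' e' :: nat and k k' r s c d :: "nat \<Rightarrow> nat"
    and a b :: "nat \<Rightarrow> 'a::field" and x :: "nat \<Rightarrow> 'a fps" and z :: "nat \<Rightarrow> 'a \<Rightarrow> 'a fps"
    and w :: 'a
  assumes tame: "tame_type TYPE('a) p f f' k k'" and f_pos: "1 \<le> f"
    and w_power: "w ^ (p ^ f' - 1) = 1"
    and w_primitive: "\<forall>j. 0 < j \<and> j < p ^ f' - 1 \<longrightarrow> w ^ j \<noteq> 1"
    and type: "pair_has_type f' e' k k' r c s d"
    and maximal: "maximal_shape p f' e' (shape f' k c) r c d"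
    and ext: "is_extension p f' r a c s b d x z"
    and e'_ge: "p ^ f' - 1 \<le> e'"
begin

lemma w_root: "w \<in> roots_q p f'"
  using w_power by (simp add: roots_q_def)

lemmas characters_distinct = tame_type_distinct_characters[OF tame f_pos w_power w_primitive]
  and characters = pair_has_type_characters[OF tame f_pos w_power w_primitive type]

lemma exponents:
  assumes "i < f'"
  shows "0 < r i" and "transition f' (shape f' k c) i \<Longrightarrow> 0 < s i"
    and "\<not> transition f' (shape f' k c) i \<Longrightarrow> s i = 0"
  using maximal_shape_exponents[OF type maximal assms e'_ge] characters[OF assms] by auto

lemma F_D_vanishes:
  assumes i: "i < f'" and "i \<in> shape f' k c" and v: "v \<in> D_eta p f' k c d z (prev f' i)"
  shows "F_D r a s b x i v = (0, 0)"
proof -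
  have j: "prev f' i < f'"
    using i by (simp add: prev_def)
  show ?thesis
  proof (cases "prev f' i \<in> shape f' k c")
    case True
    then have "\<not> transition f' (shape f' k c) i"
      using assms(2) by (simp add: transition_def)
    then show ?thesis
      using F_D_vanishes_inside_shape[OF ext i w_root, where k = k and k' = k'] characters_distinct v
        exponents[OF i] characters[OF i] characters[OF j] True assms(2)
      by auto
  next
    case False
    then have "transition f' (shape f' k c) i"
      using assms(2) by (simp add: transition_def)
    moreover have "fst v = 0"
      using D_eta_fst_eq_0[OF v w_root] characters(1)[OF j] False characters_distinct by auto
    ultimately show ?thesis
      using exponents[OF i] by (cases v) (simp add: F_D_eq zero_power)
  qed
qed

lemma V_D_vanishes:
  assumes i: "i < f'" and "i \<notin> shape f' k c" and v: "v \<in> D_eta p f' k c d z i"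
  shows "V_D e' cbar r a s b x i v = (0, 0)"
proof -
  have "fst v = 0"
    using D_eta_fst_eq_0[OF v w_root] characters(1)[OF i] assms(2) characters_distinct by auto
  moreover have "a i \<noteq> 0" "b i \<noteq> 0"
    using ext i unfolding is_extension_def by blast+
  moreover have "r i + s i = e'"
    using type i unfolding pair_has_type_def by blast
  ultimately show ?thesis
    using exponents(1)[OF i] by (cases v) (simp add: V_D_eq zero_power)
qed

end

theorem lemma5p4p1:
  fixes p f f' e e' :: nat
    and k k' :: "nat \<Rightarrow> nat"
    and r s c d :: "nat \<Rightarrow> nat"
    and a b cbar :: "nat \<Rightarrow> 'a::field"
    and x :: "nat \<Rightarrow> 'a fps"
    and z :: "nat \<Rightarrow> 'a \<Rightarrow> 'a fps"
  assumes "prime p" and "odd p" and "f \<ge> 1" and "e \<ge> 1"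
    and "e' = e * (p ^ f' - 1)"
    and "finite (UNIV :: 'a set)" and "CHAR('a) = p"
    and "\<exists>w::'a. w ^ (p ^ f' - 1) = 1 \<and> (\<forall>j. 0 < j \<and> j < p ^ f' - 1 \<longrightarrow> w ^ j \<noteq> 1)"
    and "tame_type TYPE('a) p f f' k k'"
    and "pair_has_type f' e' k k' r c s d"
    and "maximal_shape p f' e' (shape f' k c) r c d"
    and "is_extension p f' r a c s b d x z"
    and "\<forall>i<f'. cbar i \<noteq> 0"
  shows "\<forall>i<f'.
           (i \<in> shape f' k c \<longrightarrow>
              (\<forall>v\<in>D_eta p f' k c d z (prev f' i). F_D r a s b x i v = (0, 0)))
         \<and> (i \<notin> shape f' k c \<longrightarrow>
              (\<forall>v\<in>D_eta p f' k c d z i. V_D e' cbar r a s b x i v = (0, 0)))"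
proof -
  obtain w :: 'a where "w ^ (p ^ f' - 1) = 1" "\<forall>j. 0 < j \<and> j < p ^ f' - 1 \<longrightarrow> w ^ j \<noteq> 1"
    using assms(8) by blast
  moreover have "p ^ f' - 1 \<le> e'"
    using assms(4,5) by simp
  ultimately interpret maximal_shape_extension p f f' e' k k' r s c d a b x z w
    using assms(3,9-12) by unfold_locales
  show ?thesis
    using F_D_vanishes V_D_vanishes by blast
qed

end
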